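(* For every $w\in\Sigma^+$ and every $k\in\mathbb{N}$ there exist $p\in\mathbb{N}$ with $p\ge1$ and $v\in\Sigma^*$ such that $v\neq w^p$ and $w^p\equiv_k v$.
   Context: $\Sigma$ is a fixed finite alphabet. For $w \in \Sigma^*$, $\mathsf{Facs}(w)$ is the set of all factors (contiguous subwords, including $\varepsilon$ and $w$) of $w$. The structure $\mathfrak{A}_w$ representing $w$ has universe $\mathsf{Facs}(w)\cup\{\perp\}$, a ternary relation $R_\circ=\{(x,y,z)\in\mathsf{Facs}(w)^3 : x=y\cdot z\}$, for each letter $\mathtt{a}\in\Sigma$ a constant interpreted as $\mathtt{a}$ if $\mathtt{a}$ occurs in $w$ and as $\perp$ otherwise, and a constant $\varepsilon$ interpreted as the empty word. The $k$-round Ehrenfeucht–Fraïssé game on $\mathfrak{A}_w,\mathfrak{A}_v$: in each round $i$, Spoiler picks one of the two structures and an element of its universe, Duplicator answers with an element of the other structure's universe; let $a_i$ (in $\mathfrak{A}_w$) and $b_i$ (in $\mathfrak{A}_v$) be the chosen elements. Duplicator wins if the tuples $(a_1,\dots,a_k,\vec c^{\,\mathfrak{A}_w})$ and $(b_1,\dots,b_k,\vec c^{\,\mathfrak{A}_v})$, where $\vec c$ lists the interpretations of all constants, form a partial isomorphism: for all indices $i,j,l$, $a_i$ equals the interpretation of a constant $c$ iff $b_i$ equals the interpretation of $c$; $a_i=a_j$ iff $b_i=b_j$; and $a_i=a_j\cdot a_l$ iff $b_i=b_j\cdot b_l$. We write $w\equiv_k v$ if Duplicator has a winning strategy in the $k$-round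 game. *)

theory Defs
  imports "HOL-Library.Sublist"
begin

text \<open>The alphabet Sigma is the finite type 'a.  Words are lists.
  Elements of the structure A_w: None is bottom, Some u is the factor u.\<close>

definition facs :: "'a list \<Rightarrow> 'a list set" where
  "facs w = {u. sublist u w}"

definition univ_of :: "'a list \<Rightarrow> 'a list option set" where
  "univ_of w = Some ` facs w \<union> {None}"

definition rel_cat :: "'a list \<Rightarrow> 'a list option \<Rightarrow> 'a list option \<Rightarrow> 'a list option \<Rightarrow> bool" where
  "rel_cat w x y z = (\<exists>x' y' z'. x = Some x' \<and> y = Some y' \<and> z = Some z' \<and>
      x' \<in> facs w \<and> y' \<in> facs w \<and> z' \<in> facs w \<and> x' = y' @ z')"

text \<open>Constants: Inr None is epsilon, Inr (Some a) is the letter constant a.\<close>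
definition const_interp :: "'a list \<Rightarrow> 'a option \<Rightarrow> 'a list option" where
  "const_interp w c = (case c of None \<Rightarrow> Some []
     | Some a \<Rightarrow> (if a \<in> set w then Some [a] else None))"

definition ext_tuple :: "'a list \<Rightarrow> 'a list option list \<Rightarrow> nat + 'a option \<Rightarrow> 'a list option" where
  "ext_tuple w as i = (case i of Inl n \<Rightarrow> as ! n | Inr c \<Rightarrow> const_interp w c)"

definition ext_index :: "nat \<Rightarrow> (nat + 'a option) set" where
  "ext_index m = Inl ` {..<m} \<union> range Inr"

definition partial_iso ::
  "'a list \<Rightarrow> 'a list \<Rightarrow> 'a list option list \<Rightarrow> 'a list option list \<Rightarrow> bool" where
  "partial_iso w v as bs =
     (length as = length bs \<and>
      (\<forall>i\<in>ext_index (length as). \<forall>j\<in>ext_index (length as). \<forall>l\<in>ext_index (length as).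
         (ext_tuple w as i = ext_tuple w as j \<longleftrightarrow> ext_tuple v bs i = ext_tuple v bs j) \<and>
         (rel_cat w (ext_tuple w as i) (ext_tuple w as j) (ext_tuple w as l) \<longleftrightarrow>
          rel_cat v (ext_tuple v bs i) (ext_tuple v bs j) (ext_tuple v bs l))))"

fun dup_wins :: "nat \<Rightarrow> 'a list \<Rightarrow> 'a list \<Rightarrow> 'a list option list \<Rightarrow> 'a list option list \<Rightarrow> bool" where
  "dup_wins 0 w v as bs = partial_iso w v as bs"
| "dup_wins (Suc k) w v as bs =
     ((\<forall>a\<in>univ_of w. \<exists>b\<in>univ_of v. dup_wins k w v (as @ [a]) (bs @ [b])) \<and>
      (\<forall>b\<in>univ_of v. \<exists>a\<in>univ_of w. dup_wins k w v (as @ [a]) (bs @ [b])))"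

definition ef_equiv :: "nat \<Rightarrow> 'a list \<Rightarrow> 'a list \<Rightarrow> bool" where
  "ef_equiv k w v = dup_wins k w v [] []"

definition word_pow :: "'a list \<Rightarrow> nat \<Rightarrow> 'a list" where
  "word_pow w p = concat (replicate p w)"

end

theory Submission
  imports Defs "HOL-Library.FuncSet" "HOL-Library.Countable_Set"
begin

text \<open>For a fixed number of rounds and a fixed number of already chosen elements, the game
  equivalence has finite index: a position is determined, up to the game, by its atomic type
  together with the set of types reachable in one more round, and over the finite alphabet
  there are only finitely many of these.  Hence two distinct powers of \<open>w\<close> have the same
  \<open>k\<close>-round type, and they are \<open>\<equiv>\<^sub>k\<close>-equivalent.\<close>

definition classifies ::
  "nat \<Rightarrow> nat \<Rightarrow> ('a list \<Rightarrow> 'a list option list \<Rightarrow> 'b) \<Rightarrow> bool" where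
  "classifies k m g \<longleftrightarrow> finite (range (case_prod g)) \<and>
     (\<forall>w v as bs. length as = m \<longrightarrow> length bs = m \<longrightarrow> g w as = g v bs \<longrightarrow> dup_wins k w v as bs)"

definition atomic_type :: "nat \<Rightarrow> 'a list \<Rightarrow> 'a list option list \<Rightarrow>
    (nat + 'a option) \<times> (nat + 'a option) \<times> (nat + 'a option) \<Rightarrow> bool \<times> bool" where
  "atomic_type m w as = restrict (\<lambda>(i, j, l). (ext_tuple w as i = ext_tuple w as j,
      rel_cat w (ext_tuple w as i) (ext_tuple w as j) (ext_tuple w as l)))
     (ext_index m \<times> ext_index m \<times> ext_index m)"

lemma finite_ext_index: "finite (ext_index m :: (nat + 'a::finite option) set)"
  unfolding ext_index_def by simp

lemma classifies_atomic_type: "classifies 0 m (atomic_type m :: 'a::finite list \<Rightarrow> _)"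
  unfolding classifies_def
proof (intro conjI allI impI)
  let ?E = "ext_index m :: (nat + 'a option) set"
  have "atomic_type m w as \<in> PiE (?E \<times> ?E \<times> ?E) (\<lambda>_. UNIV)" for w :: "'a list" and as
    unfolding atomic_type_def by auto
  then have "range (case_prod (atomic_type m :: 'a list \<Rightarrow> _)) \<subseteq> PiE (?E \<times> ?E \<times> ?E) (\<lambda>_. UNIV)"
    by (intro image_subsetI) (simp add: split_beta del: PiE_iff)
  moreover have "finite (PiE (?E \<times> ?E \<times> ?E) (\<lambda>_. UNIV :: (bool \<times> bool) set))"
    by (intro finite_PiE) (auto simp: finite_ext_index)
  ultimately show "finite (range (case_prod (atomic_type m :: 'a list \<Rightarrow> _)))"
    by (rule finite_subset)
next
  fix w v :: "'a list" and as bs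
  assume len: "length as = m" "length bs = m" and eq: "atomic_type m w as = atomic_type m v bs"
  show "dup_wins 0 w v as bs"
    unfolding dup_wins.simps partial_iso_def
  proof (intro conjI ballI)
    show "length as = length bs" using len by simp
    fix i j l :: "nat + 'a option"
    assume "i \<in> ext_index (length as)" "j \<in> ext_index (length as)" "l \<in> ext_index (length as)"
    moreover have "atomic_type m w as (i, j, l) = atomic_type m v bs (i, j, l)" using eq by simp
    ultimately show "(ext_tuple w as i = ext_tuple w as j) = (ext_tuple v bs i = ext_tuple v bs j)"
      and "rel_cat w (ext_tuple w as i) (ext_tuple w as j) (ext_tuple w as l) =
         rel_cat v (ext_tuple v bs i) (ext_tuple v bs j) (ext_tuple v bs l)"
      using len unfolding atomic_type_def by auto
  qed
qed

text \<open>Re-encoding types as natural numbers keeps the codomain fixed along the induction on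
  the number of rounds, where each step passes from types to sets of types.\<close>

lemma classifies_to_nat_on:
  assumes "classifies k m g"
  shows "classifies k m (\<lambda>w as. to_nat_on (range (case_prod g)) (g w as))"
proof -
  let ?R = "range (case_prod g)"
  have "inj_on (to_nat_on ?R) ?R"
    using assms unfolding classifies_def by (intro inj_on_to_nat_on countable_finite) blast
  then have "to_nat_on ?R (g w as) = to_nat_on ?R (g v bs) \<Longrightarrow> g w as = g v bs" for w v as bs
    by (auto dest: inj_onD)
  moreover have "range (\<lambda>(w, as). to_nat_on ?R (g w as)) = to_nat_on ?R ` ?R"
    by (auto simp: image_image split_beta)
  ultimately show ?thesis
    using assms unfolding classifies_def by auto
qed

lemma classifies_Suc:
  assumes "classifies k (Suc m) g"
  shows "classifies (Suc k) m (\<lambda>w as. (\<lambda>a. g w (as @ [a])) ` univ_of w)"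
  unfolding classifies_def
proof (intro conjI allI impI)
  let ?h = "\<lambda>w as. (\<lambda>a. g w (as @ [a])) ` univ_of w"
  have "range (case_prod ?h) \<subseteq> Pow (range (case_prod g))" by auto
  then show "finite (range (case_prod ?h))"
    using assms unfolding classifies_def by (meson finite_Pow_iff finite_subset)
  have step: "dup_wins k w v (as @ [a]) (bs @ [b])"
    if "length as = m" "length bs = m" "g w (as @ [a]) = g v (bs @ [b])" for w v as bs a b
    using assms that unfolding classifies_def by simp
  fix w v as bs
  assume len: "length as = m" "length bs = m" and eq: "?h w as = ?h v bs"
  show "dup_wins (Suc k) w v as bs"
    unfolding dup_wins.simps
  proof (intro conjI ballI)
    fix a assume "a \<in> univ_of w"
    then obtain b where "b \<in> univ_of v" "g w (as @ [a]) = g v (bs @ [b])"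
      using eq by (metis (no_types, lifting) image_eqI imageE)
    then show "\<exists>b\<in>univ_of v. dup_wins k w v (as @ [a]) (bs @ [b])"
      using step len by blast
  next
    fix b assume "b \<in> univ_of v"
    then obtain a where "a \<in> univ_of w" "g w (as @ [a]) = g v (bs @ [b])"
      using eq by (metis (no_types, lifting) image_eqI imageE)
    then show "\<exists>a\<in>univ_of w. dup_wins k w v (as @ [a]) (bs @ [b])"
      using step len by blast
  qed
qed

lemma ex_classifies: "\<exists>g :: 'a::finite list \<Rightarrow> 'a list option list \<Rightarrow> nat. classifies k m g"
proof (induction k arbitrary: m)
  case 0
  show ?case using classifies_to_nat_on[OF classifies_atomic_type] by blast
next
  case (Suc k)
  then obtain g :: "'a list \<Rightarrow> _ \<Rightarrow> nat" where "classifies k (Suc m) g" by blast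
  show ?case using classifies_to_nat_on[OF classifies_Suc[OF \<open>classifies k (Suc m) g\<close>]] by blast
qed

lemma length_word_pow: "length (word_pow w p) = p * length w"
  unfolding word_pow_def by (simp add: length_concat sum_list_replicate)

lemma word_pow_eq_iff: "w \<noteq> [] \<Longrightarrow> word_pow w p = word_pow w q \<longleftrightarrow> p = q"
  by (metis length_0_conv length_word_pow mult_cancel2)

theorem proposition4p9:
  fixes w :: "'a::finite list" and k :: nat
  assumes "w \<noteq> []"
  shows "\<exists>p::nat. p \<ge> 1 \<and> (\<exists>v :: 'a list. v \<noteq> word_pow w p \<and> ef_equiv k (word_pow w p) v)"
proof -
  obtain g :: "'a list \<Rightarrow> 'a list option list \<Rightarrow> nat" where g: "classifies k 0 g"
    using ex_classifies by blast
  let ?f = "\<lambda>p. g (word_pow w p) []"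
  have "?f ` {1..} \<subseteq> range (case_prod g)" by auto
  then have "finite (?f ` {1..})"
    using g unfolding classifies_def by (blast intro: finite_subset)
  then have "\<not> inj_on ?f {1..}"
    using finite_imageD infinite_Ici by blast
  then obtain p q where "p \<ge> 1" "p \<noteq> q" "?f p = ?f q"
    unfolding inj_on_def by auto
  moreover have "dup_wins k (word_pow w p) (word_pow w q) [] []"
    using g \<open>?f p = ?f q\<close> unfolding classifies_def by simp
  ultimately show ?thesis
    unfolding ef_equiv_def using word_pow_eq_iff[OF assms] by metis
qed

end
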